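(* Let $\eta_i\ge0$ with $\sum_i\eta_i<\infty$ and at least one $\eta_i>0$, fix $N>0$, and let $\kappa,\gamma,q_i$ be as in the context. Define $E=\frac{1}{1-\gamma}\sum_iq_i^2\eta_i^2$ (single-task error, $E_A=E_B$ when $N_A=N_B=N$), $E_{ave}=(1-\gamma/2)E$ (error of the averaged model $(f_A+f_B)/2$), and $E_{A\to B}(1)=\frac{1}{(1-\gamma)^2}\sum_iq_i^4\eta_i^2$ (sequential error with $\rho=1$). Then $E_{A\to B}(1)< E_{ave}< E$.
   Context: $\kappa>0$ is the solution of $1=\sum_i\eta_i/(\kappa+N\eta_i)$, $\gamma=\sum_iN\eta_i^2/(\kappa+N\eta_i)^2$ (so $0<\gamma<1$), and $q_i=\kappa/(\kappa+N\eta_i)$. These expressions are the replica-method generalization errors in the noise-free equal-sample-size setting $N_A=N_B=N$ with identical targets. *)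

theory Defs
  imports Complex_Main
begin

text \<open>Replica-method quantities in the noise-free, equal-sample-size setting.
  The spectrum is a sequence eta indexed by nat; kappa is the positive solution of
  1 = sum_i eta_i/(kappa + N eta_i).\<close>

definition qcoef :: "real \<Rightarrow> real \<Rightarrow> (nat \<Rightarrow> real) \<Rightarrow> nat \<Rightarrow> real" where
  "qcoef \<kappa> N \<eta> i = \<kappa> / (\<kappa> + N * \<eta> i)"

definition gam :: "real \<Rightarrow> real \<Rightarrow> (nat \<Rightarrow> real) \<Rightarrow> real" where
  "gam \<kappa> N \<eta> = (\<Sum>i. N * (\<eta> i)^2 / (\<kappa> + N * \<eta> i)^2)"

definition E_single :: "real \<Rightarrow> real \<Rightarrow> (nat \<Rightarrow> real) \<Rightarrow> real" where
  "E_single \<kappa> N \<eta> = 1 / (1 - gam \<kappa> N \<eta>) * (\<Sum>i. (qcoef \<kappa> N \<eta> i)^2 * (\<eta> i)^2)"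

definition E_ave :: "real \<Rightarrow> real \<Rightarrow> (nat \<Rightarrow> real) \<Rightarrow> real" where
  "E_ave \<kappa> N \<eta> = (1 - gam \<kappa> N \<eta> / 2) * E_single \<kappa> N \<eta>"

definition E_seq1 :: "real \<Rightarrow> real \<Rightarrow> (nat \<Rightarrow> real) \<Rightarrow> real" where
  "E_seq1 \<kappa> N \<eta> = 1 / (1 - gam \<kappa> N \<eta>)^2 * (\<Sum>i. (qcoef \<kappa> N \<eta> i)^4 * (\<eta> i)^2)"

end

theory Submission
  imports Defs
begin

text \<open>Write p_i = 1 - q_i = N eta_i/(kappa + N eta_i) in [0,1). The equation for kappa says
  sum p_i = N, gamma = (sum p_i^2)/N, and q_i eta_i = (kappa/N) p_i, so all three errors are
  multiples of (kappa/N)^2 by expressions in the p_i and gamma. The middle inequality is just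
  gamma > 0. The first one reduces to
  sum (p_i (1 - p_i))^2 < (1 - gamma)(1 - gamma/2) sum p_i^2, which, after trading one factor
  gamma for (sum p_i^2)/(sum p_i), holds term by term.\<close>

lemma suminf_strict_mono:
  fixes f g :: "nat \<Rightarrow> real"
  assumes "summable f" "summable g" "\<And>n. f n \<le> g n" "f i < g i"
  shows "suminf f < suminf g"
proof -
  have "0 < (\<Sum>n. g n - f n)"
    using assms by (intro suminf_pos2[of _ i] summable_diff) auto
  then show ?thesis
    using suminf_diff[OF assms(2,1)] by simp
qed

lemma sq_mult_one_minus_lt:
  fixes p g :: real
  assumes "0 < p" "p < 1"
  shows "(p * (1 - p))^2 < (1 - 2*g + g^2/2) * p^2 + g^2/2 * p"
proof -
  have "2 * (1 + p) * ((1 - 2*g + g^2/2) * p^2 + g^2/2 * p - (p * (1 - p))^2)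
        = p * (((1 + p) * g - 2 * p)^2 + 2 * p^3 * (1 - p))"
    by (simp add: field_simps power2_eq_square power3_eq_cube)
  moreover have "0 < p * (((1 + p) * g - 2 * p)^2 + 2 * p^3 * (1 - p))"
    using assms by (intro mult_pos_pos add_nonneg_pos) auto
  ultimately have "0 < 2 * (1 + p) * ((1 - 2*g + g^2/2) * p^2 + g^2/2 * p - (p * (1 - p))^2)"
    by simp
  then show ?thesis
    using assms by (simp add: zero_less_mult_iff)
qed

lemma
  fixes p :: "nat \<Rightarrow> real"
  assumes p0: "\<And>i. 0 \<le> p i" and p1: "\<And>i. p i < 1" and "summable p"
  shows summable_power2_unit: "summable (\<lambda>i. p i ^ 2)"
    and summable_sq_mult_one_minus_unit: "summable (\<lambda>i. (p i * (1 - p i))^2)"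
proof -
  have sq_le: "norm (p i ^ 2) \<le> p i" for i
    using mult_left_le_one_le[of "p i" "p i"] p0[of i] p1[of i] by (simp add: power2_eq_square)
  then show "summable (\<lambda>i. p i ^ 2)"
    by (rule summable_comparison_test'[OF \<open>summable p\<close>])
  have "norm ((p i * (1 - p i))^2) \<le> norm (p i ^ 2)" for i
    using p0[of i] p1[of i] by (simp add: power_mono mult_left_le)
  then show "summable (\<lambda>i. (p i * (1 - p i))^2)"
    using sq_le by (intro summable_comparison_test'[OF \<open>summable p\<close>]) (rule order_trans)
qed

lemma suminf_power2_unit_bounds:
  fixes p :: "nat \<Rightarrow> real"
  assumes p0: "\<And>i. 0 \<le> p i" and p1: "\<And>i. p i < 1" and "summable p" and "0 < p j"
  shows "0 < (\<Sum>i. p i ^ 2)" "(\<Sum>i. p i ^ 2) < suminf p"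
proof -
  have sq: "summable (\<lambda>i. p i ^ 2)"
    using summable_power2_unit[OF p0 p1 \<open>summable p\<close>] .
  show "0 < (\<Sum>i. p i ^ 2)"
    using sq \<open>0 < p j\<close> by (intro suminf_pos2[of _ j]) auto
  have "p i ^ 2 \<le> p i" for i
    using mult_left_le_one_le[of "p i" "p i"] p0[of i] p1[of i] by (simp add: power2_eq_square)
  moreover have "p j ^ 2 < p j"
    using \<open>0 < p j\<close> p1[of j] by (simp add: power2_eq_square)
  ultimately show "(\<Sum>i. p i ^ 2) < suminf p"
    using sq \<open>summable p\<close> by (intro suminf_strict_mono[of _ _ j])
qed

text \<open>Summing the pointwise bound, the g^2/2 p_i terms contribute (g^2/2) A = (g/2) B.\<close>

lemma suminf_sq_mult_one_minus_lt:
  fixes p :: "nat \<Rightarrow> real"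
  assumes p0: "\<And>i. 0 \<le> p i" and p1: "\<And>i. p i < 1" and "summable p" and "0 < p j"
  defines "B \<equiv> \<Sum>i. p i ^ 2"
  defines "g \<equiv> B / suminf p"
  shows "(\<Sum>i. (p i * (1 - p i))^2) < (1 - g) * (1 - g/2) * B"
proof -
  have sq: "summable (\<lambda>i. p i ^ 2)"
    using summable_power2_unit[OF p0 p1 \<open>summable p\<close>] .
  have "0 < suminf p"
    using suminf_power2_unit_bounds[OF assms(1-4)] by linarith
  then have gA: "g * suminf p = B"
    by (simp add: g_def)
  have "(\<Sum>i. (p i * (1 - p i))^2) < (\<Sum>i. (1 - 2*g + g^2/2) * p i ^ 2 + g^2/2 * p i)"
  proof (rule suminf_strict_mono[of _ _ j])
    show "summable (\<lambda>i. (p i * (1 - p i))^2)"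
      using summable_sq_mult_one_minus_unit[OF p0 p1 \<open>summable p\<close>] .
    show "summable (\<lambda>i. (1 - 2*g + g^2/2) * p i ^ 2 + g^2/2 * p i)"
      using sq \<open>summable p\<close> by (intro summable_add summable_mult)
    show "(p i * (1 - p i))^2 \<le> (1 - 2*g + g^2/2) * p i ^ 2 + g^2/2 * p i" for i
      using sq_mult_one_minus_lt[of "p i" g] p0[of i] p1[of i]
      by (cases "p i = 0") auto
    show "(p j * (1 - p j))^2 < (1 - 2*g + g^2/2) * p j ^ 2 + g^2/2 * p j"
      using sq_mult_one_minus_lt[of "p j" g] \<open>0 < p j\<close> p1[of j] by simp
  qed
  also have "\<dots> = (1 - 2*g + g^2/2) * B + g^2/2 * suminf p"
    using sq \<open>summable p\<close> unfolding B_def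
    by (intro sums_unique[symmetric] sums_add sums_mult summable_sums)
  also have "\<dots> = (1 - g) * (1 - g/2) * B"
    using gA by (simp add: field_simps power2_eq_square)
  finally show ?thesis .
qed

lemma one_minus_qcoef:
  assumes "0 < \<kappa> + N * \<eta> i"
  shows "1 - qcoef \<kappa> N \<eta> i = N * \<eta> i / (\<kappa> + N * \<eta> i)"
  using assms by (simp add: qcoef_def field_simps)

lemma qcoef_bounds:
  assumes "0 < \<kappa>" "0 < N" "0 \<le> \<eta> i"
  shows "0 \<le> 1 - qcoef \<kappa> N \<eta> i" "1 - qcoef \<kappa> N \<eta> i < 1"
    and "0 < \<eta> i \<Longrightarrow> 0 < 1 - qcoef \<kappa> N \<eta> i"
proof -
  have den: "0 < \<kappa> + N * \<eta> i"
    using assms by (simp add: add_pos_nonneg)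
  then show "0 \<le> 1 - qcoef \<kappa> N \<eta> i" "0 < \<eta> i \<Longrightarrow> 0 < 1 - qcoef \<kappa> N \<eta> i"
    using assms by (simp_all add: one_minus_qcoef)
  show "1 - qcoef \<kappa> N \<eta> i < 1"
    using den assms by (simp add: qcoef_def)
qed

lemma qcoef_mult_eta:
  assumes "0 < \<kappa> + N * \<eta> i" "N \<noteq> 0"
  shows "qcoef \<kappa> N \<eta> i * \<eta> i = \<kappa> / N * (1 - qcoef \<kappa> N \<eta> i)"
  using assms by (simp add: one_minus_qcoef qcoef_def field_simps)

lemma gam_term_eq:
  assumes "0 < \<kappa> + N * \<eta> i" "N \<noteq> 0"
  shows "N * (\<eta> i)^2 / (\<kappa> + N * \<eta> i)^2 = (1 - qcoef \<kappa> N \<eta> i)^2 / N"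
proof -
  have "(1 - qcoef \<kappa> N \<eta> i)^2 / N = N * (N * (\<eta> i)^2) / (N * (\<kappa> + N * \<eta> i)^2)"
    using assms by (simp add: one_minus_qcoef power_divide power_mult_distrib power2_eq_square)
  then show ?thesis
    using assms by simp
qed

lemma
  assumes "0 < \<kappa> + N * \<eta> i" "N \<noteq> 0"
  shows qcoef_sq_eta_sq: "(qcoef \<kappa> N \<eta> i)^2 * (\<eta> i)^2 = (\<kappa>/N)^2 * (1 - qcoef \<kappa> N \<eta> i)^2"
    and qcoef_pow4_eta_sq: "(qcoef \<kappa> N \<eta> i)^4 * (\<eta> i)^2
      = (\<kappa>/N)^2 * ((1 - qcoef \<kappa> N \<eta> i) * (1 - (1 - qcoef \<kappa> N \<eta> i)))^2"
proof -
  have q_eta: "qcoef \<kappa> N \<eta> i * \<eta> i = \<kappa> / N * (1 - qcoef \<kappa> N \<eta> i)"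
    using qcoef_mult_eta[of \<kappa> N \<eta> i, OF assms] .
  have "(qcoef \<kappa> N \<eta> i)^2 * (\<eta> i)^2 = (qcoef \<kappa> N \<eta> i * \<eta> i)^2"
    by (simp add: power_mult_distrib)
  also have "\<dots> = (\<kappa>/N)^2 * (1 - qcoef \<kappa> N \<eta> i)^2"
    unfolding q_eta by (rule power_mult_distrib)
  finally show "(qcoef \<kappa> N \<eta> i)^2 * (\<eta> i)^2 = (\<kappa>/N)^2 * (1 - qcoef \<kappa> N \<eta> i)^2" .
  have "(qcoef \<kappa> N \<eta> i)^4 * (\<eta> i)^2 = (qcoef \<kappa> N \<eta> i)^2 * (qcoef \<kappa> N \<eta> i * \<eta> i)^2"
    by (simp add: power_mult_distrib flip: power_add)
  also have "\<dots> = (\<kappa>/N)^2 * ((1 - qcoef \<kappa> N \<eta> i) * (1 - (1 - qcoef \<kappa> N \<eta> i)))^2"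
    unfolding q_eta power_mult_distrib by (simp add: ac_simps)
  finally show "(qcoef \<kappa> N \<eta> i)^4 * (\<eta> i)^2
      = (\<kappa>/N)^2 * ((1 - qcoef \<kappa> N \<eta> i) * (1 - (1 - qcoef \<kappa> N \<eta> i)))^2" .
qed

lemma error_ordering:
  fixes X B S g :: real
  assumes "0 < X" "0 < B" "0 < g" "g < 1" "S < (1 - g) * (1 - g/2) * B"
  shows "1 / (1 - g)^2 * (X * S) < (1 - g/2) * (1 / (1 - g) * (X * B))"
    and "(1 - g/2) * (1 / (1 - g) * (X * B)) < 1 / (1 - g) * (X * B)"
proof -
  have "X * S < X * ((1 - g) * (1 - g/2) * B)"
    using assms by (intro mult_strict_left_mono)
  then have "1 / (1 - g)^2 * (X * S) < 1 / (1 - g)^2 * (X * ((1 - g) * (1 - g/2) * B))"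
    using assms by (intro mult_strict_left_mono) auto
  also have "\<dots> = (1 - g/2) * (1 / (1 - g) * (X * B))"
    using assms by (simp add: power2_eq_square)
  finally show "1 / (1 - g)^2 * (X * S) < (1 - g/2) * (1 / (1 - g) * (X * B))" .
  show "(1 - g/2) * (1 / (1 - g) * (X * B)) < 1 / (1 - g) * (X * B)"
    using assms mult_strict_right_mono[of "1 - g/2" 1 "1 / (1 - g) * (X * B)"] by simp
qed

theorem proposition3:
  fixes \<eta> :: "nat \<Rightarrow> real" and N \<kappa> :: real
  assumes nonneg: "\<And>i. \<eta> i \<ge> 0"
    and summ: "summable \<eta>"
    and pos: "\<exists>i. \<eta> i > 0"
    and N_pos: "N > 0"
    and kappa_pos: "\<kappa> > 0"
    and kappa_eq: "(\<lambda>i. \<eta> i / (\<kappa> + N * \<eta> i)) sums 1"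
  shows "E_seq1 \<kappa> N \<eta> < E_ave \<kappa> N \<eta> \<and> E_ave \<kappa> N \<eta> < E_single \<kappa> N \<eta>"
proof -
  define p where "p i = 1 - qcoef \<kappa> N \<eta> i" for i
  define B where "B = (\<Sum>i. p i ^ 2)"
  define g where "g = B / N"
  have den: "0 < \<kappa> + N * \<eta> i" for i
    using nonneg[of i] N_pos kappa_pos by (simp add: add_pos_nonneg)
  have p0: "0 \<le> p i" and p1: "p i < 1" for i
    unfolding p_def using qcoef_bounds nonneg N_pos kappa_pos by auto
  obtain j where "0 < p j"
    using pos qcoef_bounds(3) nonneg N_pos kappa_pos unfolding p_def by blast
  have "p = (\<lambda>i. N * (\<eta> i / (\<kappa> + N * \<eta> i)))"
    using den by (simp add: fun_eq_iff p_def one_minus_qcoef)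
  \<comment> \<open>This already makes p summable.\<close>
  then have "p sums N"
    using sums_mult[OF kappa_eq, of N] by simp
  then have "summable p" "suminf p = N"
    by (simp_all add: sums_iff)
  note sequence_facts = p0 p1 \<open>summable p\<close> \<open>0 < p j\<close>
  have "0 < B" "B < N"
    using suminf_power2_unit_bounds[OF sequence_facts] \<open>suminf p = N\<close> by (simp_all add: B_def)
  then have "0 < g" "g < 1"
    using N_pos by (simp_all add: g_def)
  have S_lt: "(\<Sum>i. (p i * (1 - p i))^2) < (1 - g) * (1 - g/2) * B"
    using suminf_sq_mult_one_minus_lt[OF sequence_facts] \<open>suminf p = N\<close>
    by (simp add: B_def g_def)
  have "gam \<kappa> N \<eta> = g"
    using summable_power2_unit[OF sequence_facts(1-3)] den N_pos
    by (simp add: gam_def gam_term_eq p_def B_def g_def suminf_divide)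
  moreover have "(\<Sum>i. (qcoef \<kappa> N \<eta> i)^2 * (\<eta> i)^2) = (\<kappa>/N)^2 * B"
    using summable_power2_unit[OF sequence_facts(1-3)] den N_pos
    by (simp add: qcoef_sq_eta_sq p_def B_def suminf_mult)
  moreover have "(\<Sum>i. (qcoef \<kappa> N \<eta> i)^4 * (\<eta> i)^2) = (\<kappa>/N)^2 * (\<Sum>i. (p i * (1 - p i))^2)"
    using summable_sq_mult_one_minus_unit[OF sequence_facts(1-3)] den N_pos
    by (simp add: qcoef_pow4_eta_sq p_def suminf_mult)
  moreover have "0 < (\<kappa>/N)^2"
    using N_pos kappa_pos by simp
  ultimately show ?thesis
    using error_ordering[of "(\<kappa>/N)^2" B g] \<open>0 < B\<close> \<open>0 < g\<close> \<open>g < 1\<close> S_lt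
    unfolding E_seq1_def E_ave_def E_single_def by simp
qed

end
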